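(* (i) Let $Y\subseteq X$ be metric spaces (with the restricted metric) and $x\in Y$. Then $\underline{\delta}_Y(x)\le\underline{\delta}_X(x)$ and $\overline{\delta}_Y(x)\le\overline{\delta}_X(x)$, with equalities if there is $R_0>0$ such that $B_X(x,R_0)\subseteq Y$. (ii) Let $X_1,X_2\subseteq X$ and $x\in X_1\cap X_2$. Then $\underline{\delta}_{X_1\cup X_2}(x)\ge\max\{\underline{\delta}_{X_1}(x),\underline{\delta}_{X_2}(x)\}$ and $\overline{\delta}_{X_1\cup X_2}(x)=\max\{\overline{\delta}_{X_1}(x),\overline{\delta}_{X_2}(x)\}$. (iii) Let $X,Y$ be metric spaces, $x\in X$, $y\in Y$, and endow $X\times Y$ with the product metric. Then $\underline{\delta}_{X\times Y}((x,y))\ge\underline{\delta}_X(x)+\underline{\delta}_Y(y)$ and $\overline{\delta}_{X\times Y}((x,y))\le\overline{\delta}_X(x)+\overline{\delta}_Y(y)$.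
   Context: For a metric space $Z$ and $z\in Z$, with $B_Z(z,r)$ the open ball, $\overline{B}(z,r)$ the closed ball and $n(r,A)$ the minimum number of open balls of radius $r$ needed to cover $A$, the lower and upper tangential dimensions are $\underline{\delta}_Z(z)=\liminf_{\lambda\to0}\liminf_{r\to0}\frac{\log n(\lambda r,\overline{B}(z,r))}{\log1/\lambda}$, $\overline{\delta}_Z(z)=\limsup_{\lambda\to0}\limsup_{r\to0}\frac{\log n(\lambda r,\overline{B}(z,r))}{\log1/\lambda}$ (possibly infinite); for a subset $E$ of a metric space, $\underline{\delta}_E$, $\overline{\delta}_E$ are computed in $E$ with the restricted metric. *)

theory Defs
  imports "HOL-Analysis.Analysis"
begin

text \<open>n(r,A): minimum number of open balls of radius r (centred in the
  space M) covering A; infinity if no finite cover exists.\<close>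
definition cover_num :: "'a set \<Rightarrow> ('a \<Rightarrow> 'a \<Rightarrow> real) \<Rightarrow> real \<Rightarrow> 'a set \<Rightarrow> ereal" where
  "cover_num M d r A =
     (INF C \<in> {C. finite C \<and> C \<subseteq> M \<and> A \<subseteq> (\<Union>c\<in>C. Metric_space.mball M d c r)}.
        ereal (real (card C)))"

definition ln_ext :: "ereal \<Rightarrow> ereal" where
  "ln_ext n = (if n = \<infinity> then \<infinity> else ereal (ln (real_of_ereal n)))"

definition tdim_ratio :: "'a set \<Rightarrow> ('a \<Rightarrow> 'a \<Rightarrow> real) \<Rightarrow> 'a \<Rightarrow> real \<Rightarrow> real \<Rightarrow> ereal" where
  "tdim_ratio M d z lam r =
     ln_ext (cover_num M d (lam * r) (Metric_space.mcball M d z r)) / ereal (ln (1 / lam))"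

definition lower_tdim :: "'a set \<Rightarrow> ('a \<Rightarrow> 'a \<Rightarrow> real) \<Rightarrow> 'a \<Rightarrow> ereal" where
  "lower_tdim M d z =
     Liminf (at_right 0) (\<lambda>lam. Liminf (at_right 0) (\<lambda>r. tdim_ratio M d z lam r))"

definition upper_tdim :: "'a set \<Rightarrow> ('a \<Rightarrow> 'a \<Rightarrow> real) \<Rightarrow> 'a \<Rightarrow> ereal" where
  "upper_tdim M d z =
     Limsup (at_right 0) (\<lambda>lam. Limsup (at_right 0) (\<lambda>r. tdim_ratio M d z lam r))"

end

theory Submission
  imports Defs
begin

(* All three parts compare covering numbers n(\<lambda> r, B(z, r)) of small balls up to a fixed
   rescaling of \<lambda> and of r and a bounded additive error in log n; none of these survives the
   division by log (1/\<lambda>) as \<lambda> \<rightarrow> 0.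
   A cover of a ball of X yields a cover of the corresponding ball of Y \<subseteq> X once the radius is
   doubled (centres are moved into Y), and if B_X(x, R0) \<subseteq> Y the small balls of X and Y coincide.
   Covering X1 \<union> X2 needs at most n1 + n2 \<le> 2 max(n1, n2) balls, which costs only log 2.
   In X \<times> Y, balls of radius r/2 around pairs of centres cover products of sets, while products
   of maximal 2r-separated sets are 2r-separated, so the covering numbers of a product ball and
   the product of the covering numbers of the factor balls bound each other up to rescaling. *)

section \<open>Covering numbers\<close>

definition is_cover :: "'a set \<Rightarrow> ('a \<Rightarrow> 'a \<Rightarrow> real) \<Rightarrow> real \<Rightarrow> 'a set \<Rightarrow> 'a set \<Rightarrow> bool" where
  "is_cover M d r A C \<longleftrightarrow> finite C \<and> C \<subseteq> M \<and> A \<subseteq> (\<Union>c\<in>C. Metric_space.mball M d c r)"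

lemma cover_num_eq_INF_card:
  "cover_num M d r A = (INF C \<in> {C. is_cover M d r A C}. ereal (real (card C)))"
  unfolding cover_num_def is_cover_def by simp

lemma cover_num_le_card: "is_cover M d r A C \<Longrightarrow> cover_num M d r A \<le> ereal (real (card C))"
  unfolding cover_num_eq_INF_card by (rule INF_lower) simp

lemma cover_num_greatest:
  "(\<And>C. is_cover M d r A C \<Longrightarrow> x \<le> ereal (real (card C))) \<Longrightarrow> x \<le> cover_num M d r A"
  unfolding cover_num_eq_INF_card by (rule INF_greatest) simp

lemma cover_num_cases:
  obtains "cover_num M d r A = \<infinity>"
  | C where "is_cover M d r A C" "cover_num M d r A = ereal (real (card C))"
proof (cases "\<exists>C. is_cover M d r A C")
  case False
  then have no_cover: "{C. is_cover M d r A C} = {}" by blast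
  have "cover_num M d r A = \<infinity>"
    unfolding cover_num_eq_INF_card no_cover by (simp add: top_ereal_def)
  then show ?thesis using that(1) by blast
next
  case True
  then obtain C where C: "is_cover M d r A C"
    and least: "\<And>C'. is_cover M d r A C' \<Longrightarrow> card C \<le> card C'"
    using ex_has_least_nat[of "is_cover M d r A" _ card] by blast
  have "cover_num M d r A = ereal (real (card C))"
    using C least by (intro antisym cover_num_le_card cover_num_greatest) auto
  then show ?thesis using that(2) C by blast
qed

lemma cover_num_nonneg: "0 \<le> cover_num M d r A"
  by (rule cover_num_greatest) simp

lemma cover_num_ge_1:
  assumes "A \<noteq> {}"
  shows "1 \<le> cover_num M d r A"
proof (rule cover_num_greatest)
  fix C assume "is_cover M d r A C"
  then have "C \<noteq> {}" "finite C" using assms unfolding is_cover_def by auto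
  then show "1 \<le> ereal (real (card C))" by (simp add: Suc_leI card_gt_0_iff)
qed

lemma cover_num_mono:
  assumes "A \<subseteq> B"
  shows "cover_num M d r A \<le> cover_num M d r B"
  unfolding cover_num_eq_INF_card
  by (rule INF_superset_mono) (use assms in \<open>auto simp: is_cover_def subset_iff\<close>)

lemma mball_subspace:
  assumes "Metric_space X d" "Y \<subseteq> X"
  shows "Metric_space.mball Y d c r = Metric_space.mball X d c r \<inter> {y. c \<in> Y \<and> y \<in> Y}"
  using assms Metric_space.subspace[OF assms] by (auto simp: Metric_space.mball_def)

lemma mcball_subspace:
  assumes "Metric_space X d" "Y \<subseteq> X" "c \<in> Y"
  shows "Metric_space.mcball Y d c r = Metric_space.mcball X d c r \<inter> Y"
  using assms Metric_space.subspace[OF assms(1,2)] by (auto simp: Metric_space.mcball_def)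

lemma cover_num_le_subspace:
  assumes "Metric_space X d" "Y \<subseteq> X"
  shows "cover_num X d r A \<le> cover_num Y d r A"
  unfolding cover_num_eq_INF_card
proof (rule INF_superset_mono)
  show "{C. is_cover Y d r A C} \<subseteq> {C. is_cover X d r A C}"
    using assms(2) unfolding is_cover_def mball_subspace[OF assms] by blast
qed simp

text \<open>Each ball of an \<open>X\<close>-cover that meets \<open>Y\<close> is replaced by the ball of twice the radius
  around one of its points in \<open>Y\<close>.\<close>
lemma cover_num_subspace_le:
  assumes X: "Metric_space X d" and Y: "Y \<subseteq> X"
  shows "cover_num Y d (2 * r) (A \<inter> Y) \<le> cover_num X d r A"
proof (rule cover_num_greatest)
  fix C assume C: "is_cover X d r A C"
  interpret X: Metric_space X d by (fact X)
  interpret Y: Metric_space Y d by (fact X.subspace[OF Y])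
  define C' where "C' = {c\<in>C. X.mball c r \<inter> Y \<noteq> {}}"
  define p where "p c = (SOME y. y \<in> X.mball c r \<inter> Y)" for c
  have p: "p c \<in> X.mball c r \<inter> Y" if "c \<in> C'" for c
  proof -
    have "\<exists>y. y \<in> X.mball c r \<inter> Y" using that unfolding C'_def by blast
    then show ?thesis unfolding p_def by (rule someI_ex)
  qed
  have "finite C" and cov: "A \<subseteq> (\<Union>c\<in>C. X.mball c r)"
    using C unfolding is_cover_def by auto
  then have "finite C'" unfolding C'_def by simp
  have "C' \<subseteq> C" unfolding C'_def by blast
  have "p ` C' \<subseteq> Y" using p by blast
  moreover have "A \<inter> Y \<subseteq> (\<Union>c\<in>p ` C'. Y.mball c (2 * r))"
  proof
    fix a assume a: "a \<in> A \<inter> Y"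
    then obtain c where c: "c \<in> C" "a \<in> X.mball c r" using cov by auto
    then have "c \<in> C'" unfolding C'_def using a by auto
    then have pc: "d c (p c) < r" "p c \<in> Y" "c \<in> X" using p[of c] by auto
    have "d c a < r" "a \<in> X" using c by auto
    moreover have "p c \<in> X" using pc(2) Y by blast
    ultimately have "d (p c) a < 2 * r"
      using X.triangle[of "p c" c a] X.commute[of c "p c"] pc by linarith
    then have "a \<in> Y.mball (p c) (2 * r)" using pc(2) a by simp
    then show "a \<in> (\<Union>c\<in>p ` C'. Y.mball c (2 * r))" using \<open>c \<in> C'\<close> by blast
  qed
  ultimately have "is_cover Y d (2 * r) (A \<inter> Y) (p ` C')"
    using \<open>finite C'\<close> unfolding is_cover_def by blast
  moreover have "card (p ` C') \<le> card C"
    using card_image_le[OF \<open>finite C'\<close>, of p] card_mono[OF \<open>finite C\<close> \<open>C' \<subseteq> C\<close>] by linarith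
  ultimately show "cover_num Y d (2 * r) (A \<inter> Y) \<le> ereal (real (card C))"
    by (meson cover_num_le_card order_trans ereal_less_eq(3) of_nat_le_iff)
qed

lemma cover_num_Un_le:
  assumes U: "Metric_space U d" and "X1 \<subseteq> U" "X2 \<subseteq> U"
  shows "cover_num U d r (A1 \<union> A2) \<le> cover_num X1 d r A1 + cover_num X2 d r A2"
proof (cases rule: cover_num_cases[of X1 d r A1])
  case 1
  then show ?thesis using cover_num_nonneg[of X2 d r A2] by simp
next
  case (2 C1)
  show ?thesis
  proof (cases rule: cover_num_cases[of X2 d r A2])
    case 1
    then show ?thesis using 2 by simp
  next
    case (2 C2)
    have "Metric_space.mball X1 d c r \<subseteq> Metric_space.mball U d c r"
      "Metric_space.mball X2 d c r \<subseteq> Metric_space.mball U d c r" for c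
      unfolding mball_subspace[OF U \<open>X1 \<subseteq> U\<close>] mball_subspace[OF U \<open>X2 \<subseteq> U\<close>] by auto
    then have "A1 \<union> A2 \<subseteq> (\<Union>c\<in>C1 \<union> C2. Metric_space.mball U d c r)"
      using \<open>is_cover X1 d r A1 C1\<close> \<open>is_cover X2 d r A2 C2\<close> unfolding is_cover_def by blast
    then have "is_cover U d r (A1 \<union> A2) (C1 \<union> C2)"
      using \<open>is_cover X1 d r A1 C1\<close> \<open>is_cover X2 d r A2 C2\<close> assms(2,3)
      unfolding is_cover_def by blast
    then have "cover_num U d r (A1 \<union> A2) \<le> ereal (real (card (C1 \<union> C2)))"
      by (rule cover_num_le_card)
    also have "\<dots> \<le> ereal (real (card C1)) + ereal (real (card C2))"
      using card_Un_le[of C1 C2] by simp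
    finally show ?thesis using \<open>cover_num X1 d r A1 = _\<close> 2 by simp
  qed
qed

section \<open>Separated sets and covering numbers of products\<close>

definition separated :: "('a \<Rightarrow> 'a \<Rightarrow> real) \<Rightarrow> real \<Rightarrow> 'a set \<Rightarrow> bool" where
  "separated d e S \<longleftrightarrow> (\<forall>a\<in>S. \<forall>b\<in>S. a \<noteq> b \<longrightarrow> e \<le> d a b)"

lemma card_separated_le_cover:
  assumes M: "Metric_space M d" and C: "is_cover M d r A C"
    and S: "S \<subseteq> A" "separated d (2 * r) S"
  shows "card S \<le> card C"
proof -
  interpret Metric_space M d by (fact M)
  have "finite C" and cov: "\<forall>a\<in>A. \<exists>c\<in>C. a \<in> mball c r"
    using C unfolding is_cover_def by blast+
  define f where "f s = (SOME c. c \<in> C \<and> s \<in> mball c r)" for s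
  have f: "f s \<in> C \<and> s \<in> mball (f s) r" if "s \<in> S" for s
    unfolding f_def using cov S(1) that by (metis (no_types, lifting) someI_ex subsetD)
  (* two points of S in one ball of radius r would be closer than 2 r *)
  have "inj_on f S"
  proof (rule inj_onI)
    fix s t assume st: "s \<in> S" "t \<in> S" "f s = f t"
    show "s = t"
    proof (rule ccontr)
      assume "s \<noteq> t"
      then have "2 * r \<le> d s t" using S(2) st unfolding separated_def by blast
      moreover have "f s \<in> M" "s \<in> M" "t \<in> M" "d (f s) s < r" "d (f s) t < r"
        using f[OF st(1)] f[OF st(2)] st(3) by auto
      ultimately show False using triangle[of s "f s" t] commute[of s "f s"] by linarith
    qed
  qed
  then have "card S = card (f ` S)" by (simp add: card_image)
  also have "\<dots> \<le> card C" using f \<open>finite C\<close> by (intro card_mono) auto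
  finally show ?thesis .
qed

lemma separated_is_cover_if_maximal:
  assumes M: "Metric_space M d" and A: "A \<subseteq> M" and e: "e > 0"
    and bound: "\<And>S. S \<subseteq> A \<Longrightarrow> finite S \<Longrightarrow> separated d e S \<Longrightarrow> card S \<le> k"
  obtains S where "S \<subseteq> A" "separated d e S" "is_cover M d e A S"
proof -
  interpret Metric_space M d by (fact M)
  let ?P = "\<lambda>S. S \<subseteq> A \<and> finite S \<and> separated d e S"
  have "?P {}" by (simp add: separated_def)
  moreover have "\<forall>S. ?P S \<longrightarrow> card S < Suc k" using bound by (simp add: less_Suc_eq_le)
  ultimately obtain S where S: "?P S" and max: "\<And>T. ?P T \<Longrightarrow> card T \<le> card S"
    using ex_has_greatest_nat[of ?P "{}" card "Suc k"] by blast
  have "A \<subseteq> (\<Union>c\<in>S. mball c e)"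
  proof
    fix a assume a: "a \<in> A"
    show "a \<in> (\<Union>c\<in>S. mball c e)"
    proof (rule ccontr)
      assume "a \<notin> (\<Union>c\<in>S. mball c e)"
      then have far: "e \<le> d s a" if "s \<in> S" for s
        using that S a A by force
      then have "a \<notin> S" using e a A by fastforce
      moreover have "?P (insert a S)"
        using S a far commute A unfolding separated_def by auto
      ultimately show False using max[of "insert a S"] S by simp
    qed
  qed
  then show ?thesis using S A that unfolding is_cover_def by blast
qed

lemma separated_Times:
  assumes "separated dX e S" "separated dY e T"
  shows "separated (prod_dist dX dY) e (S \<times> T)"
  unfolding separated_def
proof clarsimp
  fix a b a' b' assume *: "a \<in> S" "b \<in> T" "a' \<in> S" "b' \<in> T" "a = a' \<longrightarrow> b \<noteq> b'"
  have "dX a a' \<le> prod_dist dX dY (a, b) (a', b')" "dY b b' \<le> prod_dist dX dY (a, b) (a', b')"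
    by (auto simp: prod_dist_def)
  then show "e \<le> prod_dist dX dY (a, b) (a', b')"
    using * assms unfolding separated_def by (cases "a = a'") force+
qed

text \<open>Maximal \<open>2 r\<close>-separated subsets of \<open>A\<close> and \<open>B\<close> are covers, and their product is a
  \<open>2 r\<close>-separated subset of \<open>A \<times> B\<close>, hence not larger than any \<open>r\<close>-cover of \<open>A \<times> B\<close>.\<close>
lemma cover_num_Times_ge:
  assumes X: "Metric_space X dX" and Y: "Metric_space Y dY" and A: "A \<subseteq> X" "A \<noteq> {}"
    and B: "B \<subseteq> Y" "B \<noteq> {}" and r: "r > 0"
  shows "cover_num X dX (2 * r) A * cover_num Y dY (2 * r) B
         \<le> cover_num (X \<times> Y) (prod_dist dX dY) r (A \<times> B)"
proof (cases rule: cover_num_cases[of "X \<times> Y" "prod_dist dX dY" r "A \<times> B"])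
  case 1
  then show ?thesis by simp
next
  case (2 C)
  interpret Metric_space12 X dX Y dY by (simp add: Metric_space12_def X Y)
  have pack: "card S * card T \<le> card C"
    if "S \<subseteq> A" "separated dX (2 * r) S" "T \<subseteq> B" "separated dY (2 * r) T" for S T
    using card_separated_le_cover[OF Prod_metric.Metric_space_axioms \<open>is_cover _ _ _ _ C\<close> _
        separated_Times[OF that(2,4)]] Sigma_mono[OF that(1,3)]
    by (simp add: card_cartesian_product)
  obtain a b where "a \<in> A" "b \<in> B" using A B by blast
  have "separated dX (2 * r) {a}" "separated dY (2 * r) {b}" by (auto simp: separated_def)
  obtain S where S: "S \<subseteq> A" "separated dX (2 * r) S" "is_cover X dX (2 * r) A S"
    using separated_is_cover_if_maximal[OF X A(1), of "2 * r" "card C"] r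
      pack[of _ "{b}"] \<open>b \<in> B\<close> \<open>separated dY (2 * r) {b}\<close> by auto
  obtain T where T: "T \<subseteq> B" "separated dY (2 * r) T" "is_cover Y dY (2 * r) B T"
    using separated_is_cover_if_maximal[OF Y B(1), of "2 * r" "card C"] r
      pack[of "{a}"] \<open>a \<in> A\<close> \<open>separated dX (2 * r) {a}\<close> by auto
  have "cover_num X dX (2 * r) A * cover_num Y dY (2 * r) B
      \<le> ereal (real (card S)) * ereal (real (card T))"
    by (intro ereal_mult_mono' cover_num_nonneg cover_num_le_card S(3) T(3))
  also have "\<dots> \<le> ereal (real (card C))"
    using pack[OF S(1,2) T(1,2)] by (simp flip: of_nat_mult)
  finally show ?thesis using 2 by simp
qed

lemma cover_num_Times_le:
  assumes X: "Metric_space X dX" and Y: "Metric_space Y dY" and A: "A \<noteq> {}" and B: "B \<noteq> {}"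
  shows "cover_num (X \<times> Y) (prod_dist dX dY) r (A \<times> B)
         \<le> cover_num X dX (r / 2) A * cover_num Y dY (r / 2) B"
proof (cases rule: cover_num_cases[of X dX "r / 2" A])
  case 1
  moreover have "0 < cover_num Y dY (r / 2) B"
    using cover_num_ge_1[OF B] by (rule less_le_trans[rotated]) simp
  ultimately show ?thesis by auto
next
  case (2 C1)
  show ?thesis
  proof (cases rule: cover_num_cases[of Y dY "r / 2" B])
    case 1
    moreover have "0 < cover_num X dX (r / 2) A"
      using cover_num_ge_1[OF A] by (rule less_le_trans[rotated]) simp
    ultimately show ?thesis by auto
  next
    case (2 C2)
    interpret Metric_space12 X dX Y dY by (simp add: Metric_space12_def X Y)
    have C1: "finite C1" "C1 \<subseteq> X" "A \<subseteq> (\<Union>c\<in>C1. M1.mball c (r / 2))"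
      using \<open>is_cover X dX _ A C1\<close> unfolding is_cover_def by auto
    have C2: "finite C2" "C2 \<subseteq> Y" "B \<subseteq> (\<Union>c\<in>C2. M2.mball c (r / 2))"
      using \<open>is_cover Y dY _ B C2\<close> unfolding is_cover_def by auto
    have "A \<times> B \<subseteq> (\<Union>c\<in>C1 \<times> C2. Prod_metric.mball c r)"
    proof clarify
      fix a b assume "a \<in> A" "b \<in> B"
      then obtain c e where "c \<in> C1" "a \<in> M1.mball c (r / 2)" "e \<in> C2" "b \<in> M2.mball e (r / 2)"
        using C1(3) C2(3) by blast
      then show "(a, b) \<in> (\<Union>c\<in>C1 \<times> C2. Prod_metric.mball c r)"
        using mball_subset_prod_metric[of c "r / 2" e "r / 2"] by fastforce
    qed
    then have "is_cover (X \<times> Y) (prod_dist dX dY) r (A \<times> B) (C1 \<times> C2)"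
      unfolding is_cover_def using C1(1,2) C2(1,2) by (intro conjI finite_SigmaI Sigma_mono)
    then have "cover_num (X \<times> Y) (prod_dist dX dY) r (A \<times> B) \<le> ereal (real (card (C1 \<times> C2)))"
      by (rule cover_num_le_card)
    then show ?thesis using \<open>cover_num X dX _ A = _\<close> 2 by (simp add: card_cartesian_product)
  qed
qed

section \<open>Growth rates relative to \<open>log (1/\<lambda>)\<close>\<close>

lemma ln_ext_nonneg: "1 \<le> a \<Longrightarrow> 0 \<le> ln_ext a"
  by (cases a) (auto simp: ln_ext_def)

lemma ln_ext_mono: "1 \<le> a \<Longrightarrow> a \<le> b \<Longrightarrow> ln_ext a \<le> ln_ext b"
  by (cases a; cases b) (auto simp: ln_ext_def)

lemma ln_ext_mult: "1 \<le> a \<Longrightarrow> 1 \<le> b \<Longrightarrow> ln_ext (a * b) = ln_ext a + ln_ext b"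
  by (cases a; cases b) (auto simp: ln_ext_def ln_mult)

lemma ln_ext_add_le: "1 \<le> a \<Longrightarrow> 1 \<le> b \<Longrightarrow> ln_ext (a + b) \<le> max (ln_ext a) (ln_ext b) + ereal (ln 2)"
proof (cases a; cases b)
  fix u v assume ab: "1 \<le> a" "1 \<le> b" "a = ereal u" "b = ereal v"
  then have uv: "1 \<le> u" "1 \<le> v" by auto
  have "ln (u + v) \<le> ln (2 * max u v)" using uv by (intro ln_mono) auto
  also have "\<dots> = ln 2 + max (ln u) (ln v)" using uv by (simp add: ln_mult max_def)
  finally show ?thesis using ab by (auto simp: ln_ext_def max_def split: if_splits)
qed (auto simp: ln_ext_def)

lemma Limsup_add_le:
  fixes f g :: "_ \<Rightarrow> ereal"
  assumes F: "F \<noteq> bot" and "eventually (\<lambda>x. 0 \<le> f x) F" "eventually (\<lambda>x. 0 \<le> g x) F"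
  shows "Limsup F (\<lambda>x. f x + g x) \<le> Limsup F f + Limsup F g"
proof -
  have f: "0 \<le> Limsup F f" and g: "0 \<le> Limsup F g"
    using Liminf_bounded[OF assms(2)] Liminf_bounded[OF assms(3)] Liminf_le_Limsup[OF F]
    by (blast intro: order_trans)+
  show ?thesis
  proof (cases "Limsup F f = \<infinity> \<or> Limsup F g = \<infinity>")
    case True
    then show ?thesis using f g by auto
  next
    case False
    then obtain p q where p: "Limsup F f = ereal p" and q: "Limsup F g = ereal q"
      using f g by (cases "Limsup F f"; cases "Limsup F g") auto
    show ?thesis unfolding p q Limsup_le_iff
    proof (intro allI impI)
      fix z assume "ereal p + ereal q < z"
      then obtain w where w: "p + q < w" "ereal w < z" using ereal_dense2 by fastforce
      define e where "e = (w - p - q) / 2"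
      have "e > 0" using w unfolding e_def by simp
      then have "eventually (\<lambda>x. f x < ereal (p + e)) F" "eventually (\<lambda>x. g x < ereal (q + e)) F"
        using p q by (auto intro: Limsup_lessD)
      then show "eventually (\<lambda>x. f x + g x < z) F"
      proof eventually_elim
        case (elim x)
        then have "f x + g x < ereal (p + e + (q + e))" by (cases "f x"; cases "g x") auto
        then show ?case using w(2) unfolding e_def by simp
      qed
    qed
  qed
qed

lemma Limsup_max_le:
  fixes f g :: "_ \<Rightarrow> ereal"
  shows "Limsup F (\<lambda>x. max (f x) (g x)) \<le> max (Limsup F f) (Limsup F g)"
  unfolding Limsup_le_iff
proof (intro allI impI)
  fix z assume z: "max (Limsup F f) (Limsup F g) < z"
  then have "eventually (\<lambda>x. f x < z) F" "eventually (\<lambda>x. g x < z) F"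
    by (auto intro: Limsup_lessD)
  then show "eventually (\<lambda>x. max (f x) (g x) < z) F" by eventually_elim simp
qed

definition lower_log_rate :: "(real \<Rightarrow> ereal) \<Rightarrow> ereal" where
  "lower_log_rate g = Liminf (at_right 0) (\<lambda>l. g l / ereal (ln (1 / l)))"

definition upper_log_rate :: "(real \<Rightarrow> ereal) \<Rightarrow> ereal" where
  "upper_log_rate g = Limsup (at_right 0) (\<lambda>l. g l / ereal (ln (1 / l)))"

lemma eventually_ln_inverse_pos: "eventually (\<lambda>l. 0 < ln (1 / l)) (at_right (0::real))"
  by real_asymp

lemma less_lower_log_rateD:
  assumes "ereal y < lower_log_rate g"
  shows "eventually (\<lambda>l. ereal (y * ln (1 / l)) < g l) (at_right 0)"
  using less_LiminfD[OF assms[unfolded lower_log_rate_def]] eventually_ln_inverse_pos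
  by eventually_elim (simp add: ereal_less_divide_pos mult.commute)

lemma lower_log_rate_geI:
  assumes "\<And>y. ereal y < a \<Longrightarrow> eventually (\<lambda>l. ereal (y * ln (1 / l)) \<le> g l) (at_right 0)"
  shows "a \<le> lower_log_rate g"
  unfolding lower_log_rate_def le_Liminf_iff
proof (intro allI impI)
  fix z assume "z < a"
  then obtain y where y: "z < ereal y" "ereal y < a" using ereal_dense2 by blast
  show "eventually (\<lambda>l. z < g l / ereal (ln (1 / l))) (at_right 0)"
    using assms[OF y(2)] eventually_ln_inverse_pos
  proof eventually_elim
    case (elim l)
    then have "ereal y \<le> g l / ereal (ln (1 / l))" by (simp add: ereal_le_divide_pos mult.commute)
    then show ?case using y(1) by simp
  qed
qed

lemma upper_log_rate_lessD:
  assumes "upper_log_rate g < ereal y"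
  shows "eventually (\<lambda>l. g l < ereal (y * ln (1 / l))) (at_right 0)"
  using Limsup_lessD[OF assms[unfolded upper_log_rate_def]] eventually_ln_inverse_pos
  by eventually_elim (simp add: ereal_divide_less_pos mult.commute)

lemma upper_log_rate_leI:
  assumes "\<And>y. a < ereal y \<Longrightarrow> eventually (\<lambda>l. g l < ereal (y * ln (1 / l))) (at_right 0)"
  shows "upper_log_rate g \<le> a"
  unfolding upper_log_rate_def Limsup_le_iff
proof (intro allI impI)
  fix z assume "a < z"
  then obtain y where y: "a < ereal y" "ereal y < z" using ereal_dense2 by blast
  show "eventually (\<lambda>l. g l / ereal (ln (1 / l)) < z) (at_right 0)"
    using assms[OF y(1)] eventually_ln_inverse_pos
  proof eventually_elim
    case (elim l)
    then have "g l / ereal (ln (1 / l)) < ereal y" by (simp add: ereal_divide_less_pos mult.commute)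
    then show ?case using y(2) by simp
  qed
qed

lemma eventually_at_right_0_rescale:
  "c > 0 \<Longrightarrow> eventually P (at_right 0) \<Longrightarrow> eventually (\<lambda>l. P (c * l)) (at_right (0::real))"
  by (simp add: eventually_filtermap[symmetric] filtermap_times_pos_at_right)

lemma eventually_le_mult_ln_inverse:
  "k > 0 \<Longrightarrow> eventually (\<lambda>l. B \<le> k * ln (1 / l)) (at_right (0::real))"
  by real_asymp

text \<open>Rescaling \<open>\<lambda>\<close> by \<open>c\<close> and adding \<open>K\<close> change \<open>g\<close> by the bounded amounts \<open>ln c\<close> and \<open>K\<close>,
  which any slack \<open>y\<^sub>1 - y > 0\<close> in the rate absorbs against \<open>(y\<^sub>1 - y) ln (1/\<lambda>) \<rightarrow> \<infinity>\<close>.\<close>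
lemma lower_log_rate_le_rescaled:
  assumes c: "c > 0" and ev: "eventually (\<lambda>l. g1 l \<le> g2 (c * l) + ereal K) (at_right 0)"
  shows "lower_log_rate g1 \<le> lower_log_rate g2"
proof (rule lower_log_rate_geI)
  fix y assume "ereal y < lower_log_rate g1"
  then obtain y1 where y1: "y < y1" "ereal y1 < lower_log_rate g1"
    using ereal_dense2 by fastforce
  have "eventually (\<lambda>l. ereal (y1 * ln (1 / l)) < g2 (c * l) + ereal K) (at_right 0)"
    using less_lower_log_rateD[OF y1(2)] ev by eventually_elim (rule less_le_trans)
  then have "eventually (\<lambda>m. ereal (y1 * ln (1 / ((1 / c) * m))) < g2 (c * ((1 / c) * m)) + ereal K)
      (at_right 0)"
    by (rule eventually_at_right_0_rescale[rotated]) (use c in simp)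
  then have "eventually (\<lambda>m. ereal (y1 * ln (c / m)) < g2 m + ereal K) (at_right 0)"
    using c by simp
  moreover have "eventually (\<lambda>m. K - y1 * ln c \<le> (y1 - y) * ln (1 / m)) (at_right 0)"
    using y1(1) by (intro eventually_le_mult_ln_inverse) simp
  ultimately show "eventually (\<lambda>m. ereal (y * ln (1 / m)) \<le> g2 m) (at_right 0)"
    using eventually_at_right_less
  proof eventually_elim
    case (elim m)
    have "ln (c / m) = ln c + ln (1 / m)" using c elim(3) by (simp add: ln_div)
    then have "ereal (y1 * (ln c + ln (1 / m)) - K) < g2 m"
      using elim(1) by (cases "g2 m") simp_all
    moreover have "y * ln (1 / m) \<le> y1 * (ln c + ln (1 / m)) - K"
      using elim(2) by (simp add: algebra_simps)
    ultimately show ?case by (meson ereal_less_eq(3) le_less_trans less_imp_le)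
  qed
qed

lemma upper_log_rate_le_rescaled:
  assumes c: "c > 0" and ev: "eventually (\<lambda>l. g1 l \<le> g2 (c * l) + ereal K) (at_right 0)"
  shows "upper_log_rate g1 \<le> upper_log_rate g2"
proof (rule upper_log_rate_leI)
  fix y assume "upper_log_rate g2 < ereal y"
  then obtain y0 where y0: "upper_log_rate g2 < ereal y0" "y0 < y"
    using ereal_dense2 by fastforce
  have "eventually (\<lambda>l. g2 (c * l) < ereal (y0 * ln (1 / (c * l)))) (at_right 0)"
    using eventually_at_right_0_rescale[OF c upper_log_rate_lessD[OF y0(1)]] .
  moreover have "eventually (\<lambda>l. K - y0 * ln c \<le> (y - y0) * ln (1 / l)) (at_right 0)"
    using y0(2) by (intro eventually_le_mult_ln_inverse) simp
  ultimately show "eventually (\<lambda>l. g1 l < ereal (y * ln (1 / l))) (at_right 0)"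
    using ev eventually_at_right_less
  proof eventually_elim
    case (elim l)
    have "ln (1 / (c * l)) = ln (1 / l) - ln c" using c elim(4) by (simp add: ln_div ln_mult)
    then have "g2 (c * l) < ereal (y0 * (ln (1 / l) - ln c))" using elim(1) by simp
    then have "g2 (c * l) + ereal K < ereal (y0 * (ln (1 / l) - ln c) + K)"
      by (cases "g2 (c * l)") simp_all
    also have "\<dots> \<le> ereal (y * ln (1 / l))"
      using elim(2) by (simp add: algebra_simps)
    finally show ?case using elim(3) by (rule le_less_trans[rotated])
  qed
qed

lemma divide_ereal_add_nonneg:
  "0 \<le> a \<Longrightarrow> 0 \<le> b \<Longrightarrow> (a + b) / ereal t = a / ereal t + b / ereal t"
  by (simp add: divide_ereal_def ereal_left_distrib)

lemma lower_log_rate_add_le: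
  assumes "\<And>l. 0 \<le> g1 l" "\<And>l. 0 \<le> g2 l"
  shows "lower_log_rate g1 + lower_log_rate g2 \<le> lower_log_rate (\<lambda>l. g1 l + g2 l)"
  unfolding lower_log_rate_def divide_ereal_add_nonneg[OF assms]
  by (rule Liminf_add_le)
    (use eventually_ln_inverse_pos assms in \<open>auto elim!: eventually_mono simp: ereal_le_divide_pos\<close>)

lemma upper_log_rate_add_le:
  assumes "\<And>l. 0 \<le> g1 l" "\<And>l. 0 \<le> g2 l"
  shows "upper_log_rate (\<lambda>l. g1 l + g2 l) \<le> upper_log_rate g1 + upper_log_rate g2"
  unfolding upper_log_rate_def divide_ereal_add_nonneg[OF assms]
  by (rule Limsup_add_le)
    (use eventually_ln_inverse_pos assms in \<open>auto elim!: eventually_mono simp: ereal_le_divide_pos\<close>)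

lemma upper_log_rate_max_le:
  "upper_log_rate (\<lambda>l. max (g1 l) (g2 l)) \<le> max (upper_log_rate g1) (upper_log_rate g2)"
proof -
  have "max (a / ereal t) (b / ereal t) = max a b / ereal t" if "t > 0" for a b :: ereal and t
    by (rule max_of_mono) (use that in \<open>auto intro: monoI ereal_divide_right_mono\<close>)
  then have "upper_log_rate (\<lambda>l. max (g1 l) (g2 l))
      = Limsup (at_right 0) (\<lambda>l. max (g1 l / ereal (ln (1 / l))) (g2 l / ereal (ln (1 / l))))"
    unfolding upper_log_rate_def
    by (intro Limsup_eq) (use eventually_ln_inverse_pos in \<open>auto elim!: eventually_mono\<close>)
  then show ?thesis unfolding upper_log_rate_def by (simp only: Limsup_max_le)
qed

section \<open>Tangential dimensions through covering numbers of small balls\<close>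

definition log_cover_num :: "'a set \<Rightarrow> ('a \<Rightarrow> 'a \<Rightarrow> real) \<Rightarrow> 'a \<Rightarrow> real \<Rightarrow> real \<Rightarrow> ereal" where
  "log_cover_num M d z lam r = ln_ext (cover_num M d (lam * r) (Metric_space.mcball M d z r))"

definition liminf_log_cover_num :: "'a set \<Rightarrow> ('a \<Rightarrow> 'a \<Rightarrow> real) \<Rightarrow> 'a \<Rightarrow> real \<Rightarrow> ereal" where
  "liminf_log_cover_num M d z lam = Liminf (at_right 0) (log_cover_num M d z lam)"

definition limsup_log_cover_num :: "'a set \<Rightarrow> ('a \<Rightarrow> 'a \<Rightarrow> real) \<Rightarrow> 'a \<Rightarrow> real \<Rightarrow> ereal" where
  "limsup_log_cover_num M d z lam = Limsup (at_right 0) (log_cover_num M d z lam)"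

lemma cover_num_mcball_ge_1:
  "Metric_space M d \<Longrightarrow> z \<in> M \<Longrightarrow> 0 \<le> r \<Longrightarrow> 1 \<le> cover_num M d s (Metric_space.mcball M d z r)"
  by (rule cover_num_ge_1) (use Metric_space.centre_in_mcball_iff in fastforce)

lemma log_cover_num_nonneg:
  "Metric_space M d \<Longrightarrow> z \<in> M \<Longrightarrow> 0 \<le> r \<Longrightarrow> 0 \<le> log_cover_num M d z lam r"
  unfolding log_cover_num_def by (intro ln_ext_nonneg cover_num_mcball_ge_1)

lemma liminf_log_cover_num_nonneg:
  assumes "Metric_space M d" "z \<in> M"
  shows "0 \<le> liminf_log_cover_num M d z lam"
proof -
  have "eventually (\<lambda>r. 0 \<le> log_cover_num M d z lam r) (at_right 0)"
    using eventually_at_right_less[of "0::real"]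
    by eventually_elim (simp add: log_cover_num_nonneg assms)
  then show ?thesis unfolding liminf_log_cover_num_def by (rule Liminf_bounded)
qed

lemma limsup_log_cover_num_nonneg:
  assumes "Metric_space M d" "z \<in> M"
  shows "0 \<le> limsup_log_cover_num M d z lam"
proof -
  have "liminf_log_cover_num M d z lam \<le> limsup_log_cover_num M d z lam"
    unfolding liminf_log_cover_num_def limsup_log_cover_num_def by (rule Liminf_le_Limsup) simp
  then show ?thesis using liminf_log_cover_num_nonneg[OF assms] by (rule order_trans[rotated])
qed

lemma tdim_ratio_eq: "0 < lam \<Longrightarrow> lam < 1 \<Longrightarrow>
    tdim_ratio M d z lam = (\<lambda>r. log_cover_num M d z lam r * ereal (inverse (ln (1 / lam))))"
  by (simp add: fun_eq_iff tdim_ratio_def log_cover_num_def divide_ereal_def)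

lemma lower_tdim_eq_lower_log_rate:
  "lower_tdim M d z = lower_log_rate (liminf_log_cover_num M d z)"
  unfolding lower_tdim_def lower_log_rate_def
proof (rule Liminf_eq)
  show "eventually (\<lambda>lam. Liminf (at_right 0) (tdim_ratio M d z lam)
      = liminf_log_cover_num M d z lam / ereal (ln (1 / lam))) (at_right 0)"
    using eventually_at_right_real[OF zero_less_one]
    by eventually_elim
      (simp add: tdim_ratio_eq Liminf_ereal_mult_right liminf_log_cover_num_def divide_ereal_def)
qed

lemma upper_tdim_eq_upper_log_rate:
  "upper_tdim M d z = upper_log_rate (limsup_log_cover_num M d z)"
  unfolding upper_tdim_def upper_log_rate_def
proof (rule Limsup_eq)
  show "eventually (\<lambda>lam. Limsup (at_right 0) (tdim_ratio M d z lam)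
      = limsup_log_cover_num M d z lam / ereal (ln (1 / lam))) (at_right 0)"
    using eventually_at_right_real[OF zero_less_one]
    by eventually_elim
      (simp add: tdim_ratio_eq Limsup_ereal_mult_right limsup_log_cover_num_def divide_ereal_def)
qed

lemma tdim_le_if_log_cover_num_le:
  assumes c: "c > 0"
    and le: "\<And>lam. lam > 0 \<Longrightarrow>
      eventually (\<lambda>r. log_cover_num M d z lam r \<le> log_cover_num M' d' z' (c * lam) r) (at_right 0)"
  shows "lower_tdim M d z \<le> lower_tdim M' d' z'" and "upper_tdim M d z \<le> upper_tdim M' d' z'"
proof -
  have "liminf_log_cover_num M d z lam \<le> liminf_log_cover_num M' d' z' (c * lam)"
    "limsup_log_cover_num M d z lam \<le> limsup_log_cover_num M' d' z' (c * lam)"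
    if "lam > 0" for lam
    unfolding liminf_log_cover_num_def limsup_log_cover_num_def
    by (intro Liminf_mono Limsup_mono le[OF that])+
  then have ev_liminf: "eventually (\<lambda>lam. liminf_log_cover_num M d z lam
      \<le> liminf_log_cover_num M' d' z' (c * lam) + ereal 0) (at_right 0)"
    and ev_limsup: "eventually (\<lambda>lam. limsup_log_cover_num M d z lam
      \<le> limsup_log_cover_num M' d' z' (c * lam) + ereal 0) (at_right 0)"
    using eventually_at_right_less[of "0::real"] by (auto elim!: eventually_mono)
  show "lower_tdim M d z \<le> lower_tdim M' d' z'"
    unfolding lower_tdim_eq_lower_log_rate by (rule lower_log_rate_le_rescaled[OF c ev_liminf])
  show "upper_tdim M d z \<le> upper_tdim M' d' z'"
    unfolding upper_tdim_eq_upper_log_rate by (rule upper_log_rate_le_rescaled[OF c ev_limsup])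
qed

lemma log_cover_num_subspace_le:
  assumes X: "Metric_space X d" and Y: "Y \<subseteq> X" and x: "x \<in> Y" and r: "0 \<le> r"
  shows "log_cover_num Y d x lam r \<le> log_cover_num X d x (lam / 2) r"
proof -
  have "cover_num Y d (lam * r) (Metric_space.mcball Y d x r)
      \<le> cover_num X d (lam / 2 * r) (Metric_space.mcball X d x r)"
    using cover_num_subspace_le[OF X Y, of "lam / 2 * r"]
    unfolding mcball_subspace[OF X Y x] by simp
  then show ?thesis
    unfolding log_cover_num_def
    by (intro ln_ext_mono cover_num_mcball_ge_1[OF Metric_space.subspace[OF X Y] x r])
qed

lemma tdim_subspace_le:
  assumes "Metric_space X d" "Y \<subseteq> X" "x \<in> Y"
  shows "lower_tdim Y d x \<le> lower_tdim X d x" and "upper_tdim Y d x \<le> upper_tdim X d x"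
proof -
  have "eventually (\<lambda>r. log_cover_num Y d x lam r \<le> log_cover_num X d x (1 / 2 * lam) r)
    (at_right 0)" for lam
    using eventually_at_right_less[of "0::real"]
    by eventually_elim (simp add: log_cover_num_subspace_le[OF assms])
  then show "lower_tdim Y d x \<le> lower_tdim X d x" and "upper_tdim Y d x \<le> upper_tdim X d x"
    by (auto intro: tdim_le_if_log_cover_num_le[of "1 / 2"])
qed

lemma log_cover_num_le_subspace:
  assumes X: "Metric_space X d" and Y: "Y \<subseteq> X" and x: "x \<in> Y"
    and R0: "Metric_space.mball X d x R0 \<subseteq> Y" and r: "0 \<le> r" "r < R0"
  shows "log_cover_num X d x lam r \<le> log_cover_num Y d x lam r"
proof -
  have "Metric_space.mcball X d x r \<subseteq> Metric_space.mball X d x R0"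
    using r X by (auto simp: Metric_space.mcball_def Metric_space.mball_def)
  then have eq: "Metric_space.mcball Y d x r = Metric_space.mcball X d x r"
    using mcball_subspace[OF X Y x] R0 by blast
  show ?thesis
    unfolding log_cover_num_def eq
    by (intro ln_ext_mono cover_num_mcball_ge_1[OF X] cover_num_le_subspace[OF X Y])
      (use x Y r in auto)
qed

lemma tdim_subspace_eq:
  assumes X: "Metric_space X d" and Y: "Y \<subseteq> X" and x: "x \<in> Y"
    and R0: "R0 > 0" "Metric_space.mball X d x R0 \<subseteq> Y"
  shows "lower_tdim Y d x = lower_tdim X d x" and "upper_tdim Y d x = upper_tdim X d x"
proof -
  have "eventually (\<lambda>r. log_cover_num X d x lam r \<le> log_cover_num Y d x (1 * lam) r) (at_right 0)"
    for lam
    using eventually_at_right_real[OF R0(1)]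
    by eventually_elim (simp add: log_cover_num_le_subspace[OF X Y x R0(2)])
  then have "lower_tdim X d x \<le> lower_tdim Y d x" "upper_tdim X d x \<le> upper_tdim Y d x"
    by (auto intro: tdim_le_if_log_cover_num_le[of 1])
  then show "lower_tdim Y d x = lower_tdim X d x" and "upper_tdim Y d x = upper_tdim X d x"
    using tdim_subspace_le[OF X Y x] by (auto intro: antisym)
qed

lemma log_cover_num_Un_le:
  assumes X: "Metric_space X d" and "X1 \<subseteq> X" "X2 \<subseteq> X" and x: "x \<in> X1" "x \<in> X2" and r: "0 \<le> r"
  shows "log_cover_num (X1 \<union> X2) d x lam r
    \<le> max (log_cover_num X1 d x lam r) (log_cover_num X2 d x lam r) + ereal (ln 2)"
proof -
  let ?U = "X1 \<union> X2"
  have "?U \<subseteq> X" "x \<in> ?U" using assms(2,3) x by auto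
  have U: "Metric_space ?U d" using Metric_space.subspace[OF X \<open>?U \<subseteq> X\<close>] .
  have "Metric_space.mcball ?U d x r = Metric_space.mcball X1 d x r \<union> Metric_space.mcball X2 d x r"
    unfolding mcball_subspace[OF X \<open>?U \<subseteq> X\<close> \<open>x \<in> ?U\<close>] mcball_subspace[OF X assms(2) x(1)]
      mcball_subspace[OF X assms(3) x(2)] by blast
  then have "cover_num ?U d (lam * r) (Metric_space.mcball ?U d x r)
      \<le> cover_num X1 d (lam * r) (Metric_space.mcball X1 d x r)
        + cover_num X2 d (lam * r) (Metric_space.mcball X2 d x r)"
    using cover_num_Un_le[OF U, of X1 X2] by simp
  moreover have "1 \<le> cover_num ?U d (lam * r) (Metric_space.mcball ?U d x r)"
    using cover_num_mcball_ge_1[OF U \<open>x \<in> ?U\<close> r] .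
  moreover have "1 \<le> cover_num X1 d (lam * r) (Metric_space.mcball X1 d x r)"
    "1 \<le> cover_num X2 d (lam * r) (Metric_space.mcball X2 d x r)"
    using cover_num_mcball_ge_1[OF Metric_space.subspace[OF X] _ r] assms(2,3) x by auto
  ultimately show ?thesis
    unfolding log_cover_num_def by (meson ln_ext_add_le ln_ext_mono order_trans)
qed

lemma tdim_Un:
  assumes X: "Metric_space X d" and X12: "X1 \<subseteq> X" "X2 \<subseteq> X" and x: "x \<in> X1" "x \<in> X2"
  shows "max (lower_tdim X1 d x) (lower_tdim X2 d x) \<le> lower_tdim (X1 \<union> X2) d x"
    and "upper_tdim (X1 \<union> X2) d x = max (upper_tdim X1 d x) (upper_tdim X2 d x)"
proof -
  have U: "Metric_space (X1 \<union> X2) d" using Metric_space.subspace[OF X] X12 by simp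
  note le1 = tdim_subspace_le[OF U Un_upper1 x(1)] and le2 = tdim_subspace_le[OF U Un_upper2 x(2)]
  show "max (lower_tdim X1 d x) (lower_tdim X2 d x) \<le> lower_tdim (X1 \<union> X2) d x"
    using le1(1) le2(1) by (rule max.boundedI)
  have limsup_Un: "limsup_log_cover_num (X1 \<union> X2) d x lam
      \<le> max (limsup_log_cover_num X1 d x lam) (limsup_log_cover_num X2 d x lam) + ereal (ln 2)"
    for lam
  proof -
    have "eventually (\<lambda>r. log_cover_num (X1 \<union> X2) d x lam r
        \<le> max (log_cover_num X1 d x lam r) (log_cover_num X2 d x lam r) + ereal (ln 2))
      (at_right 0)"
      using eventually_at_right_less[of "0::real"]
      by eventually_elim (rule log_cover_num_Un_le[OF X X12 x], simp)
    then have "limsup_log_cover_num (X1 \<union> X2) d x lam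
        \<le> Limsup (at_right 0) (\<lambda>r. max (log_cover_num X1 d x lam r) (log_cover_num X2 d x lam r)
          + ereal (ln 2))"
      unfolding limsup_log_cover_num_def by (rule Limsup_mono)
    also have "\<dots> = Limsup (at_right 0)
        (\<lambda>r. max (log_cover_num X1 d x lam r) (log_cover_num X2 d x lam r)) + ereal (ln 2)"
      by (rule Limsup_add_ereal_right) simp_all
    also have "\<dots>
        \<le> max (limsup_log_cover_num X1 d x lam) (limsup_log_cover_num X2 d x lam) + ereal (ln 2)"
      unfolding limsup_log_cover_num_def by (intro add_right_mono Limsup_max_le)
    finally show ?thesis .
  qed
  have "upper_tdim (X1 \<union> X2) d x
      \<le> upper_log_rate
          (\<lambda>lam. max (limsup_log_cover_num X1 d x lam) (limsup_log_cover_num X2 d x lam))"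
    unfolding upper_tdim_eq_upper_log_rate
    by (rule upper_log_rate_le_rescaled[where c=1 and K="ln 2"]) (simp_all add: limsup_Un)
  also have "\<dots> \<le> max (upper_tdim X1 d x) (upper_tdim X2 d x)"
    unfolding upper_tdim_eq_upper_log_rate by (rule upper_log_rate_max_le)
  finally show "upper_tdim (X1 \<union> X2) d x = max (upper_tdim X1 d x) (upper_tdim X2 d x)"
    using le1(2) le2(2) by (auto intro: antisym)
qed

lemma Liminf_at_right_0_rescale:
  fixes f :: "real \<Rightarrow> 'a :: complete_lattice"
  assumes "k > 0"
  shows "Liminf (at_right 0) (\<lambda>r. f (k * r)) = Liminf (at_right 0) f"
proof -
  have "inj ((*) k)" using assms by (auto intro: injI)
  then have "Liminf (filtermap ((*) k) (at_right 0)) f = Liminf (at_right 0) (\<lambda>r. f (k * r))"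
    by (rule Liminf_filtermap_eq)
  then show ?thesis using filtermap_times_pos_at_right[OF assms, of 0] by simp
qed

lemma log_cover_num_Times_ge:
  assumes X: "Metric_space X dX" and Y: "Metric_space Y dY" and x: "x \<in> X" and y: "y \<in> Y"
    and lam: "lam > 0" and r: "r > 0"
  shows "log_cover_num X dX x (4 * lam) (r / 2) + log_cover_num Y dY y (4 * lam) (r / 2)
    \<le> log_cover_num (X \<times> Y) (prod_dist dX dY) (x, y) lam r"
proof -
  interpret Metric_space12 X dX Y dY by (simp add: Metric_space12_def X Y)
  have "x \<in> M1.mcball x (r / 2)" "y \<in> M2.mcball y (r / 2)" using x y r by simp_all
  then have A: "M1.mcball x (r / 2) \<subseteq> X" "M1.mcball x (r / 2) \<noteq> {}"
    "1 \<le> cover_num X dX (4 * lam * (r / 2)) (M1.mcball x (r / 2))"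
    and B: "M2.mcball y (r / 2) \<subseteq> Y" "M2.mcball y (r / 2) \<noteq> {}"
    "1 \<le> cover_num Y dY (4 * lam * (r / 2)) (M2.mcball y (r / 2))"
    using M1.mcball_subset_mspace M2.mcball_subset_mspace by (blast intro: cover_num_ge_1)+
  have "cover_num X dX (4 * lam * (r / 2)) (M1.mcball x (r / 2))
      * cover_num Y dY (4 * lam * (r / 2)) (M2.mcball y (r / 2))
      \<le> cover_num (X \<times> Y) (prod_dist dX dY) (lam * r) (M1.mcball x (r / 2) \<times> M2.mcball y (r / 2))"
    using cover_num_Times_ge[OF X Y A(1,2) B(1,2), of "lam * r"] lam r by (simp add: mult_ac)
  also have "\<dots> \<le> cover_num (X \<times> Y) (prod_dist dX dY) (lam * r) (Prod_metric.mcball (x, y) r)"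
    using mcball_subset_prod_metric[of x "r / 2" y "r / 2"] by (intro cover_num_mono) simp
  finally have le: "cover_num X dX (4 * lam * (r / 2)) (M1.mcball x (r / 2))
      * cover_num Y dY (4 * lam * (r / 2)) (M2.mcball y (r / 2))
      \<le> cover_num (X \<times> Y) (prod_dist dX dY) (lam * r) (Prod_metric.mcball (x, y) r)" .
  have "1 \<le> cover_num X dX (4 * lam * (r / 2)) (M1.mcball x (r / 2))
      * cover_num Y dY (4 * lam * (r / 2)) (M2.mcball y (r / 2))"
    using ereal_mult_mono'[OF _ _ A(3) B(3)] by simp
  then show ?thesis
    unfolding log_cover_num_def ln_ext_mult[OF A(3) B(3), symmetric] by (rule ln_ext_mono[OF _ le])
qed

lemma log_cover_num_Times_le:
  assumes X: "Metric_space X dX" and Y: "Metric_space Y dY" and x: "x \<in> X" and y: "y \<in> Y"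
    and r: "0 \<le> r"
  shows "log_cover_num (X \<times> Y) (prod_dist dX dY) (x, y) lam r
    \<le> log_cover_num X dX x (lam / 2) r + log_cover_num Y dY y (lam / 2) r"
proof -
  interpret Metric_space12 X dX Y dY by (simp add: Metric_space12_def X Y)
  have "x \<in> M1.mcball x r" "y \<in> M2.mcball y r" using x y r by simp_all
  then have ne: "M1.mcball x r \<noteq> {}" "M2.mcball y r \<noteq> {}" by blast+
  then have A: "1 \<le> cover_num X dX (lam / 2 * r) (M1.mcball x r)"
    and B: "1 \<le> cover_num Y dY (lam / 2 * r) (M2.mcball y r)"
    by (blast intro: cover_num_ge_1)+
  have "cover_num (X \<times> Y) (prod_dist dX dY) (lam * r) (Prod_metric.mcball (x, y) r)
      \<le> cover_num (X \<times> Y) (prod_dist dX dY) (lam * r) (M1.mcball x r \<times> M2.mcball y r)"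
    by (intro cover_num_mono mcball_prod_metric_subset)
  also have "\<dots>
      \<le> cover_num X dX (lam / 2 * r) (M1.mcball x r) * cover_num Y dY (lam / 2 * r) (M2.mcball y r)"
    using cover_num_Times_le[OF X Y ne, of "lam * r"] by (simp add: mult_ac)
  finally have le: "cover_num (X \<times> Y) (prod_dist dX dY) (lam * r) (Prod_metric.mcball (x, y) r)
      \<le> cover_num X dX (lam / 2 * r) (M1.mcball x r) * cover_num Y dY (lam / 2 * r) (M2.mcball y r)" .
  have "1 \<le> cover_num (X \<times> Y) (prod_dist dX dY) (lam * r) (Prod_metric.mcball (x, y) r)"
    using Prod_metric.Metric_space_axioms x y r by (intro cover_num_mcball_ge_1) auto
  then show ?thesis
    unfolding log_cover_num_def ln_ext_mult[OF A B, symmetric] by (rule ln_ext_mono[OF _ le])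
qed

lemma lower_tdim_Times_ge:
  assumes X: "Metric_space X dX" and Y: "Metric_space Y dY" and x: "x \<in> X" and y: "y \<in> Y"
  shows "lower_tdim X dX x + lower_tdim Y dY y \<le> lower_tdim (X \<times> Y) (prod_dist dX dY) (x, y)"
proof -
  let ?gX = "liminf_log_cover_num X dX x" and ?gY = "liminf_log_cover_num Y dY y"
    and ?gP = "liminf_log_cover_num (X \<times> Y) (prod_dist dX dY) (x, y)"
  have gX: "0 \<le> ?gX l" and gY: "0 \<le> ?gY l" for l
    using liminf_log_cover_num_nonneg[OF X x] liminf_log_cover_num_nonneg[OF Y y] by simp_all
  have sum: "?gX (4 * lam) + ?gY (4 * lam) \<le> ?gP lam" if "lam > 0" for lam
  proof -
    have "?gX (4 * lam) + ?gY (4 * lam)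
        = Liminf (at_right 0) (\<lambda>r. log_cover_num X dX x (4 * lam) (r / 2))
          + Liminf (at_right 0) (\<lambda>r. log_cover_num Y dY y (4 * lam) (r / 2))"
      unfolding liminf_log_cover_num_def
      using Liminf_at_right_0_rescale[of "1 / 2" "log_cover_num X dX x (4 * lam)"]
        Liminf_at_right_0_rescale[of "1 / 2" "log_cover_num Y dY y (4 * lam)"] by simp
    also have "\<dots> \<le> Liminf (at_right 0)
        (\<lambda>r. log_cover_num X dX x (4 * lam) (r / 2) + log_cover_num Y dY y (4 * lam) (r / 2))"
      by (rule Liminf_add_le, simp; use eventually_at_right_less[of "0::real"] in eventually_elim)
        (simp_all add: log_cover_num_nonneg X Y x y)
    also have "\<dots> \<le> ?gP lam"
      unfolding liminf_log_cover_num_def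
      using eventually_at_right_less[of "0::real"]
      by (intro Liminf_mono, eventually_elim) (simp add: log_cover_num_Times_ge[OF X Y x y that])
    finally show ?thesis .
  qed
  have "lower_log_rate ?gX + lower_log_rate ?gY
      \<le> lower_log_rate (\<lambda>l. ?gX (4 * l)) + lower_log_rate (\<lambda>l. ?gY (4 * l))"
    by (intro add_mono lower_log_rate_le_rescaled[where c="1 / 4" and K=0]) simp_all
  also have "\<dots> \<le> lower_log_rate (\<lambda>l. ?gX (4 * l) + ?gY (4 * l))"
    by (rule lower_log_rate_add_le) (simp_all add: gX gY)
  also have "\<dots> \<le> lower_log_rate ?gP"
    using eventually_at_right_less[of "0::real"]
    by (intro lower_log_rate_le_rescaled[where c=1 and K=0], simp, eventually_elim) (simp add: sum)
  finally show ?thesis unfolding lower_tdim_eq_lower_log_rate .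
qed

lemma upper_tdim_Times_le:
  assumes X: "Metric_space X dX" and Y: "Metric_space Y dY" and x: "x \<in> X" and y: "y \<in> Y"
  shows "upper_tdim (X \<times> Y) (prod_dist dX dY) (x, y) \<le> upper_tdim X dX x + upper_tdim Y dY y"
proof -
  let ?hX = "limsup_log_cover_num X dX x" and ?hY = "limsup_log_cover_num Y dY y"
    and ?hP = "limsup_log_cover_num (X \<times> Y) (prod_dist dX dY) (x, y)"
  have hX: "0 \<le> ?hX l" and hY: "0 \<le> ?hY l" for l
    using limsup_log_cover_num_nonneg[OF X x] limsup_log_cover_num_nonneg[OF Y y] by simp_all
  have sum: "?hP lam \<le> ?hX (lam / 2) + ?hY (lam / 2)" for lam
  proof -
    have "?hP lam \<le> Limsup (at_right 0)
        (\<lambda>r. log_cover_num X dX x (lam / 2) r + log_cover_num Y dY y (lam / 2) r)"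
      unfolding limsup_log_cover_num_def
      using eventually_at_right_less[of "0::real"]
      by (intro Limsup_mono, eventually_elim) (simp add: log_cover_num_Times_le[OF X Y x y])
    also have "\<dots> \<le> ?hX (lam / 2) + ?hY (lam / 2)"
      unfolding limsup_log_cover_num_def
      by (rule Limsup_add_le, simp; use eventually_at_right_less[of "0::real"] in eventually_elim)
        (simp_all add: log_cover_num_nonneg X Y x y)
    finally show ?thesis .
  qed
  have "upper_log_rate ?hP \<le> upper_log_rate (\<lambda>l. ?hX (1 / 2 * l) + ?hY (1 / 2 * l))"
    by (rule upper_log_rate_le_rescaled[where c=1 and K=0]) (simp_all add: sum)
  also have "\<dots> \<le> upper_log_rate (\<lambda>l. ?hX (1 / 2 * l)) + upper_log_rate (\<lambda>l. ?hY (1 / 2 * l))"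
    by (rule upper_log_rate_add_le) (simp_all add: hX hY)
  also have "\<dots> \<le> upper_log_rate ?hX + upper_log_rate ?hY"
    by (intro add_mono upper_log_rate_le_rescaled[where c="1 / 2" and K=0]) simp_all
  finally show ?thesis unfolding upper_tdim_eq_upper_log_rate .
qed

theorem proposition3p6:
  shows
  "(\<forall>(X::'a set) d Y x. Metric_space X d \<and> Y \<subseteq> X \<and> x \<in> Y \<longrightarrow>
        lower_tdim Y d x \<le> lower_tdim X d x \<and> upper_tdim Y d x \<le> upper_tdim X d x \<and>
        ((\<exists>R0>0. Metric_space.mball X d x R0 \<subseteq> Y) \<longrightarrow>
           lower_tdim Y d x = lower_tdim X d x \<and> upper_tdim Y d x = upper_tdim X d x))
   \<and> (\<forall>(X::'a set) d X1 X2 x. Metric_space X d \<and> X1 \<subseteq> X \<and> X2 \<subseteq> X \<and> x \<in> X1 \<inter> X2 \<longrightarrow>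
        lower_tdim (X1 \<union> X2) d x \<ge> max (lower_tdim X1 d x) (lower_tdim X2 d x) \<and>
        upper_tdim (X1 \<union> X2) d x = max (upper_tdim X1 d x) (upper_tdim X2 d x))
   \<and> (\<forall>(X::'a set) dX (Y::'b set) dY x y.
        Metric_space X dX \<and> Metric_space Y dY \<and> x \<in> X \<and> y \<in> Y \<longrightarrow>
        lower_tdim (X \<times> Y) (prod_dist dX dY) (x, y) \<ge> lower_tdim X dX x + lower_tdim Y dY y \<and>
        upper_tdim (X \<times> Y) (prod_dist dX dY) (x, y) \<le> upper_tdim X dX x + upper_tdim Y dY y)"
proof (intro conjI allI impI; elim conjE exE IntE)
  fix X :: "'a set" and d Y x R0
  assume "Metric_space X d" "Y \<subseteq> X" "x \<in> Y"
  then show "lower_tdim Y d x \<le> lower_tdim X d x" "upper_tdim Y d x \<le> upper_tdim X d x"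
    by (rule tdim_subspace_le)+
  assume "R0 > 0" "Metric_space.mball X d x R0 \<subseteq> Y"
  with \<open>Metric_space X d\<close> \<open>Y \<subseteq> X\<close> \<open>x \<in> Y\<close>
  show "lower_tdim Y d x = lower_tdim X d x" "upper_tdim Y d x = upper_tdim X d x"
    by (rule tdim_subspace_eq)+
next
  fix X :: "'a set" and d X1 X2 x
  assume "Metric_space X d" "X1 \<subseteq> X" "X2 \<subseteq> X" "x \<in> X1" "x \<in> X2"
  then show "max (lower_tdim X1 d x) (lower_tdim X2 d x) \<le> lower_tdim (X1 \<union> X2) d x"
    and "upper_tdim (X1 \<union> X2) d x = max (upper_tdim X1 d x) (upper_tdim X2 d x)"
    by (rule tdim_Un)+
next
  fix X :: "'a set" and dX and Y :: "'b set" and dY x y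
  assume "Metric_space X dX" "Metric_space Y dY" "x \<in> X" "y \<in> Y"
  then show "lower_tdim X dX x + lower_tdim Y dY y \<le> lower_tdim (X \<times> Y) (prod_dist dX dY) (x, y)"
    and "upper_tdim (X \<times> Y) (prod_dist dX dY) (x, y) \<le> upper_tdim X dX x + upper_tdim Y dY y"
    by (rule lower_tdim_Times_ge upper_tdim_Times_le)+
qed

end
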